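(* The floor function is not definable in $Q_0(\mathbf s)$: there is no $\Sigma_{ms}$-term $t(x)$ with only variable $x$ such that $t(q)=\lfloor q\rfloor$ for all rationals $q$ (evaluated in $Q_0(\mathbf s)$), where $\lfloor q\rfloor=\max\{n\in\mathbb Z\mid n\le q\}$.
   Context: $\Sigma_m=(0,1,+,\cdot,-,{}^{-1})$ and $\Sigma_{ms}=\Sigma_m$ extended with a unary symbol $\mathbf s$. $Q_0$ is the field of rational numbers with the total inverse $q^{-1}=1/q$ for $q\neq0$, $0^{-1}=0$. $Q_0(\mathbf s)$ is $Q_0$ expanded with the sign function $\mathbf s(q)=-1$ if $q<0$, $0$ if $q=0$, $1$ if $q>0$. *)

theory Defs
  imports Main "HOL.Rat"
begin

datatype ms_term =
    Var
  | Zero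
  | One
  | Add ms_term ms_term
  | Mul ms_term ms_term
  | Neg ms_term
  | Inv ms_term
  | Sgn ms_term

text \<open>Evaluation in Q_0(s): rationals with total inverse (inverse 0 = 0 in Isabelle's rat)
  and the sign function.\<close>
fun eval_ms :: "ms_term \<Rightarrow> rat \<Rightarrow> rat" where
  "eval_ms Var q = q"
| "eval_ms Zero q = 0"
| "eval_ms One q = 1"
| "eval_ms (Add t u) q = eval_ms t q + eval_ms u q"
| "eval_ms (Mul t u) q = eval_ms t q * eval_ms u q"
| "eval_ms (Neg t) q = - eval_ms t q"
| "eval_ms (Inv t) q = inverse (eval_ms t q)"
| "eval_ms (Sgn t) q = (if eval_ms t q < 0 then -1 else if eval_ms t q = 0 then 0 else 1)"

end

theory Submission
  imports Defs "HOL-Computational_Algebra.Polynomial"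
begin

(*
  Every unary Sigma_ms-term agrees, for all sufficiently large
  arguments, with a rational function p/r (p, r polynomials, r nonzero).
  The field operations obviously preserve this shape; the key point is that
  inverse and sign do too, because a nonzero polynomial has eventually the
  sign of its leading coefficient, so the sign of p/r is eventually constant.
  Consequently such a function is eventually zero or eventually nonzero.
  But x - floor x vanishes at every integer and equals 1/2 at every
  half-integer, so it is neither; hence floor is not given by a term.
*)

lemma eventually_poly_ge_lead_coeff:
  fixes p :: "'a::linordered_field poly"
  assumes "lead_coeff p > 0"
  shows "eventually (\<lambda>x. lead_coeff p \<le> poly p x) at_top"
  using assms
proof (induction p)
  case 0
  then show ?case by simp
next
  case (pCons a p)
  show ?case
  proof (cases "p = 0")
    case True
    then show ?thesis by simp
  next
    case False
    then have lc: "lead_coeff (pCons a p) = lead_coeff p" by simp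
    with pCons.prems have pos: "lead_coeff p > 0" by simp
    with pCons.IH have ev_p: "eventually (\<lambda>x. lead_coeff p \<le> poly p x) at_top" by simp
    have ev_x: "eventually (\<lambda>x. max 0 (1 - a / lead_coeff p) \<le> x) at_top"
      by (rule eventually_ge_at_top)
    show ?thesis unfolding lc
      using eventually_conj[OF ev_p ev_x]
    proof (rule eventually_mono)
      fix x assume "lead_coeff p \<le> poly p x \<and> max 0 (1 - a / lead_coeff p) \<le> x"
      then have px: "lead_coeff p \<le> poly p x" and x0: "0 \<le> x"
        and xa: "1 - a / lead_coeff p \<le> x" by auto
      have "lead_coeff p = a + (1 - a / lead_coeff p) * lead_coeff p"
        using pos False by (simp add: left_diff_distrib)
      also have "\<dots> \<le> a + x * lead_coeff p"
        using xa pos by (simp add: mult_right_mono)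
      also have "\<dots> \<le> a + x * poly p x"
        using px x0 by (simp add: mult_left_mono)
      finally show "lead_coeff p \<le> poly (pCons a p) x" by simp
    qed
  qed
qed

lemma eventually_sgn_poly:
  fixes p :: "'a::linordered_field poly"
  shows "eventually (\<lambda>x. sgn (poly p x) = sgn (lead_coeff p)) at_top"
proof -
  consider "lead_coeff p > 0" | "lead_coeff (- p) > 0" | "p = 0"
    by (metis leading_coeff_0_iff lead_coeff_minus linorder_neqE_linordered_idom neg_0_less_iff_less)
  then show ?thesis
  proof cases
    case 1
    show ?thesis using eventually_poly_ge_lead_coeff[OF 1]
      by (rule eventually_mono) (use 1 in auto)
  next
    case 2
    show ?thesis using eventually_poly_ge_lead_coeff[OF 2]
      by (rule eventually_mono) (use 2 in \<open>auto simp: sgn_if\<close>)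
  qed simp
qed

lemma eventually_poly_nonzero:
  fixes p :: "'a::linordered_field poly"
  assumes "p \<noteq> 0"
  shows "eventually (\<lambda>x. poly p x \<noteq> 0) at_top"
  using eventually_sgn_poly[of p] by (rule eventually_mono) (use assms in \<open>auto simp: sgn_if split: if_splits\<close>)

definition eventually_rational :: "('a::linordered_field \<Rightarrow> 'a) \<Rightarrow> bool" where
  "eventually_rational f \<longleftrightarrow>
     (\<exists>p r. r \<noteq> 0 \<and> eventually (\<lambda>x. f x = poly p x / poly r x) at_top)"

lemma eventually_rationalI:
  assumes "r \<noteq> 0" "eventually (\<lambda>x. f x = poly p x / poly r x) at_top"
  shows "eventually_rational f"
  using assms unfolding eventually_rational_def by blast

lemma eventually_rationalE:
  assumes "eventually_rational f"
  obtains p r where "r \<noteq> 0" "eventually (\<lambda>x. f x = poly p x / poly r x) at_top"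
  using assms unfolding eventually_rational_def by blast

lemma eventually_rational_const: "eventually_rational (\<lambda>_. c)"
  by (rule eventually_rationalI[of 1 _ "[:c:]"]) simp_all

lemma eventually_rational_ident: "eventually_rational (\<lambda>x. x)"
  by (rule eventually_rationalI[of 1 _ "[:0, 1:]"]) simp_all

lemma eventually_rational_add:
  assumes "eventually_rational f" "eventually_rational g"
  shows "eventually_rational (\<lambda>x. f x + g x)"
proof -
  obtain p1 r1 where r1: "r1 \<noteq> 0" and f: "eventually (\<lambda>x. f x = poly p1 x / poly r1 x) at_top"
    using assms(1) by (rule eventually_rationalE)
  obtain p2 r2 where r2: "r2 \<noteq> 0" and g: "eventually (\<lambda>x. g x = poly p2 x / poly r2 x) at_top"
    using assms(2) by (rule eventually_rationalE)
  have "eventually (\<lambda>x. f x + g x = poly (p1 * r2 + p2 * r1) x / poly (r1 * r2) x) at_top"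
    using f g eventually_poly_nonzero[OF r1] eventually_poly_nonzero[OF r2]
    by eventually_elim (simp add: field_simps)
  then show ?thesis by (rule eventually_rationalI[rotated]) (simp add: r1 r2)
qed

lemma eventually_rational_mult:
  assumes "eventually_rational f" "eventually_rational g"
  shows "eventually_rational (\<lambda>x. f x * g x)"
proof -
  obtain p1 r1 where r1: "r1 \<noteq> 0" and f: "eventually (\<lambda>x. f x = poly p1 x / poly r1 x) at_top"
    using assms(1) by (rule eventually_rationalE)
  obtain p2 r2 where r2: "r2 \<noteq> 0" and g: "eventually (\<lambda>x. g x = poly p2 x / poly r2 x) at_top"
    using assms(2) by (rule eventually_rationalE)
  have "eventually (\<lambda>x. f x * g x = poly (p1 * p2) x / poly (r1 * r2) x) at_top"
    using f g by eventually_elim simp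
  then show ?thesis by (rule eventually_rationalI[rotated]) (simp add: r1 r2)
qed

lemma eventually_rational_uminus:
  assumes "eventually_rational f"
  shows "eventually_rational (\<lambda>x. - f x)"
  using eventually_rational_mult[OF eventually_rational_const[of "-1"] assms] by simp

lemma eventually_rational_diff:
  assumes "eventually_rational f" "eventually_rational g"
  shows "eventually_rational (\<lambda>x. f x - g x)"
  using eventually_rational_add[OF assms(1) eventually_rational_uminus[OF assms(2)]] by simp

text \<open>Inverting p/r gives r/p; if p is the zero polynomial the function is
  eventually 0, and so is its (total) inverse.\<close>
lemma eventually_rational_inverse:
  assumes "eventually_rational f"
  shows "eventually_rational (\<lambda>x. inverse (f x))"
proof -
  obtain p r where "r \<noteq> 0" and f: "eventually (\<lambda>x. f x = poly p x / poly r x) at_top"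
    using assms by (rule eventually_rationalE)
  show ?thesis
  proof (cases "p = 0")
    case True
    have "eventually (\<lambda>x. inverse (f x) = poly 0 x / poly 1 x) at_top"
      using f by eventually_elim (simp add: True)
    then show ?thesis by (rule eventually_rationalI[rotated]) simp
  next
    case False
    have "eventually (\<lambda>x. inverse (f x) = poly r x / poly p x) at_top"
      using f by eventually_elim simp
    then show ?thesis using False by (intro eventually_rationalI)
  qed
qed

text \<open>The sign of p/r is eventually the constant sgn (lead_coeff p) * sgn (lead_coeff r).\<close>
lemma eventually_rational_sgn:
  assumes "eventually_rational f"
  shows "eventually_rational (\<lambda>x. sgn (f x))"
proof -
  obtain p r where "r \<noteq> 0" and f: "eventually (\<lambda>x. f x = poly p x / poly r x) at_top"
    using assms by (rule eventually_rationalE)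
  define c where "c = sgn (lead_coeff p) / sgn (lead_coeff r)"
  have "eventually (\<lambda>x. sgn (f x) = poly [:c:] x / poly 1 x) at_top"
    using f eventually_sgn_poly[of p] eventually_sgn_poly[of r]
    by eventually_elim (simp add: c_def)
  then show ?thesis by (rule eventually_rationalI[rotated]) simp
qed

text \<open>Dichotomy: an eventually rational function is eventually zero or
  eventually nonzero, according to whether its numerator vanishes.\<close>
lemma eventually_rational_zero_or_nonzero:
  assumes "eventually_rational f"
  shows "eventually (\<lambda>x. f x = 0) at_top \<or> eventually (\<lambda>x. f x \<noteq> 0) at_top"
proof -
  obtain p r where r: "r \<noteq> 0" and f: "eventually (\<lambda>x. f x = poly p x / poly r x) at_top"
    using assms by (rule eventually_rationalE)
  show ?thesis
  proof (cases "p = 0")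
    case True
    then show ?thesis using f by (auto elim: eventually_mono)
  next
    case False
    have "eventually (\<lambda>x. f x \<noteq> 0) at_top"
      using f eventually_poly_nonzero[OF False] eventually_poly_nonzero[OF r]
      by eventually_elim simp
    then show ?thesis ..
  qed
qed

lemma eval_ms_Sgn_eq_sgn: "eval_ms (Sgn t) q = sgn (eval_ms t q)"
  by (simp add: sgn_if)

lemma eventually_rational_eval_ms: "eventually_rational (eval_ms t)"
proof (induction t)
  case Var
  then show ?case using eventually_rational_ident by simp
next
  case Zero
  then show ?case using eventually_rational_const[of 0] by simp
next
  case One
  then show ?case using eventually_rational_const[of 1] by simp
next
  case (Add t u)
  then show ?case using eventually_rational_add by simp
next
  case (Mul t u)
  then show ?case using eventually_rational_mult by simp
next
  case (Neg t)
  then show ?case using eventually_rational_uminus by simp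
next
  case (Inv t)
  then show ?case using eventually_rational_inverse by simp
next
  case (Sgn t)
  then show ?case using eventually_rational_sgn unfolding eval_ms_Sgn_eq_sgn by blast
qed

text \<open>The fractional part x - floor x vanishes at all integers but not at any
  half-integer, so it violates the dichotomy above.\<close>
lemma floor_not_eventually_rational:
  "\<not> eventually_rational (\<lambda>x::'a::floor_ceiling. of_int \<lfloor>x\<rfloor>)"
proof
  assume "eventually_rational (\<lambda>x::'a. of_int \<lfloor>x\<rfloor>)"
  then have "eventually_rational (\<lambda>x::'a. x - of_int \<lfloor>x\<rfloor>)"
    by (rule eventually_rational_diff[OF eventually_rational_ident])
  then consider N :: 'a where "\<And>x. x \<ge> N \<Longrightarrow> x - of_int \<lfloor>x\<rfloor> = 0"
    | N :: 'a where "\<And>x. x \<ge> N \<Longrightarrow> x - of_int \<lfloor>x\<rfloor> \<noteq> 0"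
    using eventually_rational_zero_or_nonzero unfolding eventually_at_top_linorder by blast
  then show False
  proof cases
    case 1
    define x :: 'a where "x = of_int \<lceil>N\<rceil> + 1 / 2"
    have "x \<ge> N" unfolding x_def using le_of_int_ceiling[of N] by linarith
    moreover have "\<lfloor>x\<rfloor> = \<lceil>N\<rceil>" unfolding x_def by (intro floor_unique) auto
    ultimately show False using 1 unfolding x_def by fastforce
  next
    case 2
    show False using 2[of "of_int \<lceil>N\<rceil>"] le_of_int_ceiling[of N] by simp
  qed
qed

theorem corollary5:
  shows "\<not> (\<exists>t :: ms_term. \<forall>q :: rat. eval_ms t q = of_int \<lfloor>q\<rfloor>)"
proof
  assume "\<exists>t :: ms_term. \<forall>q :: rat. eval_ms t q = of_int \<lfloor>q\<rfloor>"
  then obtain t where "eval_ms t = (\<lambda>q. of_int \<lfloor>q\<rfloor>)" by blast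
  with eventually_rational_eval_ms[of t] show False
    using floor_not_eventually_rational[where 'a = rat] by simp
qed

end
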